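(* Let $S(\lambda)=\frac12\begin{bmatrix}\lambda_1^2&\lambda_1\lambda_2&\lambda_1\lambda_2&\lambda_2^2&\sqrt3\end{bmatrix}$ on ${\mathbb B}^2$, let $C=\begin{bmatrix}\frac12&0&0\end{bmatrix}$, $D=\begin{bmatrix}0&0&0&0&\frac{\sqrt3}{2}\end{bmatrix}$, and for $\gamma\in{\mathbb C}$ let $A_{\gamma,1}=\begin{bmatrix}0&1&0\\0&0&0\\ \gamma&0&0\end{bmatrix}$, $A_{\gamma,2}=\begin{bmatrix}0&0&1\\-\gamma&0&0\\0&0&0\end{bmatrix}$, ${\mathbf A}_\gamma=(A_{\gamma,1},A_{\gamma,2})$. Then $S\in{\mathcal S}_2({\mathbb C}^5,{\mathbb C})$, and for every $\gamma$ with $|\gamma|<\sqrt{3/8}$ the pair $(C,{\mathbf A}_\gamma)$ is contractive and observable and there exist $B_{\gamma,1},B_{\gamma,2}\in{\mathbb C}^{3\times5}$ such that $S(\lambda)=D+C(I-\lambda_1A_{\gamma,1}-\lambda_2A_{\gamma,2})^{-1}(\lambda_1B_{\gamma,1}+\lambda_2B_{\gamma,2})$ is a weakly coisometric (observable) realization of $S$. Moreover, for $\gamma\neq\gamma'$ the pairs $(C,{\mathbf A}_\gamma)$ and $(C,{\mathbf A}_{\gamma'})$ are not unitarily equivalent.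
   Context: ${\mathcal S}_d({\mathcal U},{\mathcal Y})$ is the set of ${\mathcal L}({\mathcal U},{\mathcal Y})$-valued holomorphic $S$ on the unit ball ${\mathbb B}^d\subset{\mathbb C}^d$ such that $M_S:f\mapsto Sf$ is a contraction from ${\mathcal H}_{\mathcal U}(k_d)$ into ${\mathcal H}_{\mathcal Y}(k_d)$, where ${\mathcal H}_{\mathcal Y}(k_d)$ is the reproducing kernel Hilbert space with kernel $I_{\mathcal Y}/(1-\langle\lambda,\zeta\rangle)$. A pair $(C,{\mathbf A})$, $C\in{\mathcal L}({\mathcal X},{\mathcal Y})$, ${\mathbf A}=(A_1,\dots,A_d)$, is contractive if $\sum_jA_j^*A_j+C^*C\le I$, observable if $C(I-\sum_j\lambda_jA_j)^{-1}x\equiv0$ on ${\mathbb B}^d$ implies $x=0$. Two pairs $(C,{\mathbf A})$, $(C',{\mathbf A}')$ are unitarily equivalent if there is a unitary $U$ with $C'U=C$ and $A_j'U=UA_j$ for all $j$. With $A=\mathrm{col}(A_j)$, $B=\mathrm{col}(B_j)$, $Z(\lambda)=[\lambda_1I\ \cdots\ \lambda_dI]$, the realization $S(\lambda)=D+C(I-Z(\lambda)A)^{-1}Z(\lambda)B$ is weakly coisometric if ${\mathbf U}=\begin{bmatrix}A&B\\C&D\end{bmatrix}$ is a contraction and ${\mathbf U}^*$ is isometric on ${\mathcal D}\oplus{\mathcal Y}$, ${\mathcal D}=\overline{\mathrm{span}}\{Z(\zeta)^*(I-A^*Z(\zeta)^* )^{-1}C^*y:\zeta\in{\mathbb B}^d,y\in{\mathcal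 Y}\}$. *)

theory Defs
  imports "HOL-Analysis.Analysis"
begin

definition ball2 :: "(complex^2) set" where
  "ball2 = ball 0 1"

definition mono2 :: "complex^2 \<Rightarrow> nat \<times> nat \<Rightarrow> complex" where
  "mono2 z = (\<lambda>(i,j). (z$1)^i * (z$2)^j)"

text \<open>Squared norm of the monomial lambda^alpha in H(k_d), k_d = 1/(1 - <lambda,zeta>):
  ||lambda^alpha||^2 = alpha! / |alpha|!.\<close>
definition DA_weight :: "nat \<times> nat \<Rightarrow> real" where
  "DA_weight = (\<lambda>(i,j). fact i * fact j / fact (i + j))"

text \<open>c is the (vector-valued) Taylor coefficient family of f on the ball, and the
  H(k_2)-norm of f is finite. Such f are exactly the elements of H_{C^n}(k_2).\<close>
definition DA_coeffs :: "(complex^2 \<Rightarrow> complex^'n) \<Rightarrow> (nat \<times> nat \<Rightarrow> complex^'n) \<Rightarrow> bool" where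
  "DA_coeffs f c \<longleftrightarrow>
     (\<forall>z\<in>ball2. ((\<lambda>\<alpha>. mono2 z \<alpha> *s c \<alpha>) has_sum f z) UNIV) \<and>
     (\<lambda>\<alpha>. DA_weight \<alpha> * (norm (c \<alpha>))^2) summable_on UNIV"

definition DA_normsq :: "(nat \<times> nat \<Rightarrow> complex^'n) \<Rightarrow> real" where
  "DA_normsq c = infsum (\<lambda>\<alpha>. DA_weight \<alpha> * (norm (c \<alpha>))^2) UNIV"

definition holo2 :: "(complex^2 \<Rightarrow> complex) \<Rightarrow> bool" where
  "holo2 f \<longleftrightarrow> (\<forall>z\<in>ball2. \<exists>L. (f has_derivative L) (at z) \<and>
                               (\<forall>c v. L (c *s v) = c * L v))"

text \<open>Schur class S_2(C^u, C^y): holomorphic L(C^u,C^y)-valued S on the ball such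
  that M_S : f \<mapsto> S f is a contraction H_{C^u}(k_2) \<rightarrow> H_{C^y}(k_2).\<close>
definition schur2 :: "(complex^2 \<Rightarrow> complex^'u^'y) \<Rightarrow> bool" where
  "schur2 S \<longleftrightarrow> (\<forall>i j. holo2 (\<lambda>z. S z $ i $ j)) \<and>
     (\<forall>f c. DA_coeffs f c \<longrightarrow>
        (\<exists>e. DA_coeffs (\<lambda>z. S z *v f z) e \<and> DA_normsq e \<le> DA_normsq c))"

definition cadj :: "complex^'n^'m \<Rightarrow> complex^'m^'n" where
  "cadj M = (\<chi> i j. cnj (M $ j $ i))"

definition smat :: "complex \<Rightarrow> complex^'n^'m \<Rightarrow> complex^'n^'m" where
  "smat c M = (\<chi> i j. c * M $ i $ j)"

definition unitary_mat :: "complex^'n^'n \<Rightarrow> bool" where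
  "unitary_mat U \<longleftrightarrow> cadj U ** U = mat 1 \<and> U ** cadj U = mat 1"

definition resolv2 :: "complex^'x^'x \<Rightarrow> complex^'x^'x \<Rightarrow> complex^2 \<Rightarrow> complex^'x^'x" where
  "resolv2 A1 A2 z = matrix_inv (mat 1 - smat (z$1) A1 - smat (z$2) A2)"

text \<open>Contractive pair: A_1^*A_1 + A_2^*A_2 + C^*C \<le> I (as quadratic forms).\<close>
definition contractive_pair2 :: "complex^'x^'y \<Rightarrow> complex^'x^'x \<Rightarrow> complex^'x^'x \<Rightarrow> bool" where
  "contractive_pair2 C A1 A2 \<longleftrightarrow>
     (\<forall>x. (norm (A1 *v x))^2 + (norm (A2 *v x))^2 + (norm (C *v x))^2 \<le> (norm x)^2)"

definition observable2 :: "complex^'x^'y \<Rightarrow> complex^'x^'x \<Rightarrow> complex^'x^'x \<Rightarrow> bool" where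
  "observable2 C A1 A2 \<longleftrightarrow>
     (\<forall>x. (\<forall>z\<in>ball2. C *v (resolv2 A1 A2 z *v x) = 0) \<longrightarrow> x = 0)"

definition unit_equiv2 :: "complex^'x^'y \<Rightarrow> complex^'x^'x \<Rightarrow> complex^'x^'x \<Rightarrow>
                           complex^'x^'y \<Rightarrow> complex^'x^'x \<Rightarrow> complex^'x^'x \<Rightarrow> bool" where
  "unit_equiv2 C A1 A2 C' A1' A2' \<longleftrightarrow>
     (\<exists>U. unitary_mat U \<and> C' ** U = C \<and> A1' ** U = U ** A1 \<and> A2' ** U = U ** A2)"

definition realizes2 :: "(complex^2 \<Rightarrow> complex^'u^'y) \<Rightarrow> complex^'x^'x \<Rightarrow> complex^'x^'x \<Rightarrow>
     complex^'u^'x \<Rightarrow> complex^'u^'x \<Rightarrow> complex^'x^'y \<Rightarrow> complex^'u^'y \<Rightarrow> bool" where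
  "realizes2 S A1 A2 B1 B2 C D \<longleftrightarrow>
     (\<forall>z\<in>ball2. S z = D + C ** resolv2 A1 A2 z ** (smat (z$1) B1 + smat (z$2) B2))"

definition cspan2 :: "((complex^'x) \<times> (complex^'x)) set \<Rightarrow> ((complex^'x) \<times> (complex^'x)) set" where
  "cspan2 G = {(\<Sum>i<n. c i *s fst (g i), \<Sum>i<n. c i *s snd (g i)) | (n::nat) c g. \<forall>i<n. g i \<in> G}"

text \<open>The space \<D> = closed span of Z(zeta)^*(I - A^*Z(zeta)^*)^{-1} C^* y.\<close>
definition Dspace2 :: "complex^'x^'x \<Rightarrow> complex^'x^'x \<Rightarrow> complex^'x^'y \<Rightarrow> ((complex^'x) \<times> (complex^'x)) set" where
  "Dspace2 A1 A2 C = closure (cspan2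
     {(cnj (\<zeta>$1) *s v, cnj (\<zeta>$2) *s v) | \<zeta> y v. \<zeta> \<in> ball2 \<and>
        v = matrix_inv (mat 1 - smat (cnj (\<zeta>$1)) (cadj A1) - smat (cnj (\<zeta>$2)) (cadj A2))
              *v (cadj C *v y)})"

text \<open>Weakly coisometric colligation U = [A B; C D] : X \<oplus> U \<rightarrow> X^2 \<oplus> Y:
  U is a contraction and U^* is isometric on \<D> \<oplus> Y.\<close>
definition weakly_coisometric2 :: "complex^'x^'x \<Rightarrow> complex^'x^'x \<Rightarrow>
     complex^'u^'x \<Rightarrow> complex^'u^'x \<Rightarrow> complex^'x^'y \<Rightarrow> complex^'u^'y \<Rightarrow> bool" where
  "weakly_coisometric2 A1 A2 B1 B2 C D \<longleftrightarrow>
     (\<forall>x u. (norm (A1 *v x + B1 *v u))^2 + (norm (A2 *v x + B2 *v u))^2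
              + (norm (C *v x + D *v u))^2 \<le> (norm x)^2 + (norm u)^2) \<and>
     (\<forall>h\<in>Dspace2 A1 A2 C. \<forall>y.
        (norm (cadj A1 *v fst h + cadj A2 *v snd h + cadj C *v y))^2
        + (norm (cadj B1 *v fst h + cadj B2 *v snd h + cadj D *v y))^2
        = (norm (fst h))^2 + (norm (snd h))^2 + (norm y)^2)"

definition S_ex :: "complex^2 \<Rightarrow> complex^5^1" where
  "S_ex z = vector [vector [(z$1)^2 / 2, z$1 * z$2 / 2, z$1 * z$2 / 2, (z$2)^2 / 2,
                            complex_of_real (sqrt 3) / 2]]"

definition C_ex :: "complex^3^1" where
  "C_ex = vector [vector [1/2, 0, 0]]"

definition D_ex :: "complex^5^1" where
  "D_ex = vector [vector [0, 0, 0, 0, complex_of_real (sqrt 3) / 2]]"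

definition A1_ex :: "complex \<Rightarrow> complex^3^3" where
  "A1_ex \<gamma> = vector [vector [0, 1, 0], vector [0, 0, 0], vector [\<gamma>, 0, 0]]"

definition A2_ex :: "complex \<Rightarrow> complex^3^3" where
  "A2_ex \<gamma> = vector [vector [0, 0, 1], vector [-\<gamma>, 0, 0], vector [0, 0, 0]]"

end

theory Submission
  imports Defs
begin

text \<open>
  Writing \<open>M\<^sub>S f = ((\<lambda>\<^sub>1 (\<lambda>\<^sub>1 f\<^sub>1 + \<lambda>\<^sub>2 f\<^sub>2) + \<lambda>\<^sub>2 (\<lambda>\<^sub>1 f\<^sub>3 + \<lambda>\<^sub>2 f\<^sub>4)) + \<surd>3 f\<^sub>5) / 2\<close>,
  membership of \<open>S\<close> in the Schur class comes down to the row shift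
  \<open>(g, h) \<mapsto> \<lambda>\<^sub>1 g + \<lambda>\<^sub>2 h\<close> being a contraction of the Drury--Arveson space. On Taylor
  coefficients this is the weighted Cauchy--Schwarz inequality
  \<open>|A + B|\<^sup>2 \<le> (i + j)/i |A|\<^sup>2 + (i + j)/j |B|\<^sup>2\<close> combined with the recursion of the weights
  \<open>i! j! / (i + j)!\<close>; the coefficient \<open>(1/2, \<surd>3/2)\<close> is a unit vector.

  For the colligation, \<open>N = \<lambda>\<^sub>1 A\<^sub>1 + \<lambda>\<^sub>2 A\<^sub>2\<close> is nilpotent, so the resolvent is the
  polynomial \<open>I + N + N\<^sup>2\<close> and \<open>C (I - N)\<^sup>-\<^sup>1 x = (x\<^sub>1 + \<lambda>\<^sub>1 x\<^sub>2 + \<lambda>\<^sub>2 x\<^sub>3) / 2\<close>, which gives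
  observability and the realization. The parameter is a unitary invariant because
  \<open>C A\<^sub>2 A\<^sub>1 = \<gamma> C\<close>. Every generator \<open>(h, h')\<close> of \<open>\<D>\<close> satisfies \<open>h\<^sub>3 = h'\<^sub>2\<close>, and on such
  vectors the adjoint colligation is isometric; contractivity of the colligation is a
  parallelogram-law estimate using \<open>|\<gamma>|\<^sup>2 \<le> 3/8\<close>.
\<close>

lemma exhaust_5:
  fixes x :: 5
  shows "x = 1 \<or> x = 2 \<or> x = 3 \<or> x = 4 \<or> x = 5"
proof (induct x)
  case (of_int z)
  then have "z = 0 \<or> z = 1 \<or> z = 2 \<or> z = 3 \<or> z = 4" by fastforce
  then show ?case by auto
qed

lemma forall_5: "(\<forall>i::5. P i) \<longleftrightarrow> P 1 \<and> P 2 \<and> P 3 \<and> P 4 \<and> P 5"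
  by (metis exhaust_5)

lemma UNIV_5: "UNIV = {1, 2, 3, 4, 5::5}"
  using exhaust_5 by auto

lemma sum_5: "sum f (UNIV::5 set) = f 1 + f 2 + f 3 + f 4 + f 5"
  unfolding UNIV_5 by (simp add: ac_simps)

lemma vector_5 [simp]:
  "(vector [a, b, c, d, e] :: ('a::zero)^5) $ 1 = a"
  "(vector [a, b, c, d, e] :: ('a::zero)^5) $ 2 = b"
  "(vector [a, b, c, d, e] :: ('a::zero)^5) $ 3 = c"
  "(vector [a, b, c, d, e] :: ('a::zero)^5) $ 4 = d"
  "(vector [a, b, c, d, e] :: ('a::zero)^5) $ 5 = e"
  unfolding vector_def by simp_all

section \<open>Taylor coefficients and the Drury--Arveson norm\<close>

lemma has_sum_sum:
  fixes f :: "'i \<Rightarrow> 'a \<Rightarrow> 'b::topological_comm_monoid_add"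
  assumes "finite I" "\<And>i. i \<in> I \<Longrightarrow> (f i has_sum s i) A"
  shows "((\<lambda>x. \<Sum>i\<in>I. f i x) has_sum (\<Sum>i\<in>I. s i)) A"
  using assms by (induction I rule: finite_induct) (auto intro: has_sum_add)

lemma has_sum_reindex_inj_zero:
  assumes "inj h" "\<And>x. x \<notin> range h \<Longrightarrow> g x = 0"
  shows "(g has_sum s) UNIV \<longleftrightarrow> ((g \<circ> h) has_sum s) UNIV"
proof -
  have "(g has_sum s) UNIV \<longleftrightarrow> (g has_sum s) (range h)"
    by (rule has_sum_cong_neutral) (use assms(2) in auto)
  also have "\<dots> \<longleftrightarrow> ((g \<circ> h) has_sum s) UNIV"
    by (rule has_sum_reindex[OF assms(1)])
  finally show ?thesis .
qed

lemma has_sum_vec_nth: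
  fixes f :: "'a \<Rightarrow> 'b::real_normed_vector^'n"
  assumes "(f has_sum v) A"
  shows "((\<lambda>x. f x $ k) has_sum v $ k) A"
  using has_sum_bounded_linear[OF bounded_linear_vec_nth assms] .

lemma has_sum_vec_1:
  fixes f :: "'a \<Rightarrow> 'b::real_normed_vector^1"
  assumes "((\<lambda>x. f x $ 1) has_sum v $ 1) A"
  shows "(f has_sum v) A"
proof -
  have "bounded_linear (vec :: 'b \<Rightarrow> 'b^1)"
    by (rule bounded_linear_intro[where K=1]) (simp_all add: vec_eq_iff norm_vector_1)
  from has_sum_bounded_linear[OF this assms] show ?thesis by simp
qed

lemma parallelogram_law:
  fixes a b :: "'a::real_inner"
  shows "(norm (a + b))\<^sup>2 + (norm (a - b))\<^sup>2 = 2 * (norm a)\<^sup>2 + 2 * (norm b)\<^sup>2"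
  by (simp add: power2_norm_eq_inner inner_add inner_diff inner_commute)

lemma norm_rotation_sq:
  fixes a b :: "'a::real_inner" and c s :: real
  assumes "c\<^sup>2 + s\<^sup>2 = 1"
  shows "(norm (c *\<^sub>R a - s *\<^sub>R b))\<^sup>2 + (norm (s *\<^sub>R a + c *\<^sub>R b))\<^sup>2 = (norm a)\<^sup>2 + (norm b)\<^sup>2"
proof -
  have "(norm (c *\<^sub>R a - s *\<^sub>R b))\<^sup>2 + (norm (s *\<^sub>R a + c *\<^sub>R b))\<^sup>2
      = (c\<^sup>2 + s\<^sup>2) * ((norm a)\<^sup>2 + (norm b)\<^sup>2)"
    unfolding power2_norm_eq_inner
    by (simp add: inner_add inner_diff inner_commute power2_eq_square algebra_simps)
  with assms show ?thesis by simp
qed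

lemma norm_add_sq_le_weighted:
  fixes a b :: "'a::real_inner" and x y :: real
  shows "(norm (a + b))\<^sup>2 * (x * y) \<le> (x + y) * y * (norm a)\<^sup>2 + (x + y) * x * (norm b)\<^sup>2"
proof -
  have "(x + y) * y * (norm a)\<^sup>2 + (x + y) * x * (norm b)\<^sup>2 - (norm (a + b))\<^sup>2 * (x * y)
      = (norm (y *\<^sub>R a - x *\<^sub>R b))\<^sup>2"
    unfolding power2_norm_eq_inner
    by (simp add: inner_add inner_diff inner_commute power2_eq_square algebra_simps)
  then show ?thesis by (metis diff_ge_0_iff_ge zero_le_power2)
qed

definition shift1 :: "(nat \<times> nat \<Rightarrow> 'a::zero) \<Rightarrow> nat \<times> nat \<Rightarrow> 'a" where
  "shift1 a = (\<lambda>(i, j). if i = 0 then 0 else a (i - 1, j))"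

definition shift2 :: "(nat \<times> nat \<Rightarrow> 'a::zero) \<Rightarrow> nat \<times> nat \<Rightarrow> 'a" where
  "shift2 a = (\<lambda>(i, j). if j = 0 then 0 else a (i, j - 1))"

text \<open>If \<open>a\<close>, \<open>b\<close> are the Taylor coefficients of \<open>g\<close>, \<open>h\<close>, then \<open>row_shift a b\<close> are those
  of \<open>\<lambda>\<^sub>1 g + \<lambda>\<^sub>2 h\<close>.\<close>
definition row_shift :: "(nat \<times> nat \<Rightarrow> 'a::monoid_add) \<Rightarrow> (nat \<times> nat \<Rightarrow> 'a) \<Rightarrow> nat \<times> nat \<Rightarrow> 'a"
  where "row_shift a b \<alpha> = shift1 a \<alpha> + shift2 b \<alpha>"

lemma shift1_has_sum_iff: "(shift1 a has_sum s) UNIV \<longleftrightarrow> (a has_sum s) UNIV"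
proof -
  let ?h = "\<lambda>(i::nat, j::nat). (Suc i, j)"
  have "shift1 a x = 0" if "x \<notin> range ?h" for x
  proof (cases x)
    case (Pair i j)
    with that have "i = 0" by (cases i) (auto simp: image_iff)
    with Pair show ?thesis by (simp add: shift1_def)
  qed
  moreover have "inj ?h" by (auto simp: inj_def)
  moreover have "shift1 a \<circ> ?h = a" by (auto simp: shift1_def)
  ultimately show ?thesis by (metis has_sum_reindex_inj_zero)
qed

lemma shift2_has_sum_iff: "(shift2 a has_sum s) UNIV \<longleftrightarrow> (a has_sum s) UNIV"
proof -
  let ?h = "\<lambda>(i::nat, j::nat). (i, Suc j)"
  have "shift2 a x = 0" if "x \<notin> range ?h" for x
  proof (cases x)
    case (Pair i j)
    with that have "j = 0" by (cases j) (auto simp: image_iff)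
    with Pair show ?thesis by (simp add: shift2_def)
  qed
  moreover have "inj ?h" by (auto simp: inj_def)
  moreover have "shift2 a \<circ> ?h = a" by (auto simp: shift2_def)
  ultimately show ?thesis by (metis has_sum_reindex_inj_zero)
qed

lemma has_sum_monomials_shift1:
  assumes "((\<lambda>\<alpha>. mono2 z \<alpha> * a \<alpha>) has_sum s) UNIV"
  shows "((\<lambda>\<alpha>. mono2 z \<alpha> * shift1 a \<alpha>) has_sum (z$1 * s)) UNIV"
proof -
  have "(\<lambda>\<alpha>. mono2 z \<alpha> * shift1 a \<alpha>) = shift1 (\<lambda>\<beta>. z$1 * (mono2 z \<beta> * a \<beta>))"
  proof
    fix \<alpha> :: "nat \<times> nat"
    show "mono2 z \<alpha> * shift1 a \<alpha> = shift1 (\<lambda>\<beta>. z$1 * (mono2 z \<beta> * a \<beta>)) \<alpha>"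
      by (cases \<alpha>, rename_tac i j, case_tac i) (simp_all add: shift1_def mono2_def)
  qed
  then show ?thesis
    using has_sum_cmult_right[OF assms] by (simp add: shift1_has_sum_iff)
qed

lemma has_sum_monomials_shift2:
  assumes "((\<lambda>\<alpha>. mono2 z \<alpha> * a \<alpha>) has_sum s) UNIV"
  shows "((\<lambda>\<alpha>. mono2 z \<alpha> * shift2 a \<alpha>) has_sum (z$2 * s)) UNIV"
proof -
  have "(\<lambda>\<alpha>. mono2 z \<alpha> * shift2 a \<alpha>) = shift2 (\<lambda>\<beta>. z$2 * (mono2 z \<beta> * a \<beta>))"
  proof
    fix \<alpha> :: "nat \<times> nat"
    show "mono2 z \<alpha> * shift2 a \<alpha> = shift2 (\<lambda>\<beta>. z$2 * (mono2 z \<beta> * a \<beta>)) \<alpha>"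
      by (cases \<alpha>, rename_tac i j, case_tac j) (simp_all add: shift2_def mono2_def)
  qed
  then show ?thesis
    using has_sum_cmult_right[OF assms] by (simp add: shift2_has_sum_iff)
qed

lemma has_sum_monomials_row_shift:
  assumes "((\<lambda>\<alpha>. mono2 z \<alpha> * a \<alpha>) has_sum s) UNIV"
    and "((\<lambda>\<alpha>. mono2 z \<alpha> * b \<alpha>) has_sum t) UNIV"
  shows "((\<lambda>\<alpha>. mono2 z \<alpha> * row_shift a b \<alpha>) has_sum (z$1 * s + z$2 * t)) UNIV"
  using has_sum_add[OF has_sum_monomials_shift1[OF assms(1)] has_sum_monomials_shift2[OF assms(2)]]
  by (simp add: row_shift_def distrib_left)

definition DA_normsq_term :: "(nat \<times> nat \<Rightarrow> 'a::real_normed_vector) \<Rightarrow> nat \<times> nat \<Rightarrow> real" where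
  "DA_normsq_term c \<alpha> = DA_weight \<alpha> * (norm (c \<alpha>))\<^sup>2"

lemma DA_coeffs_iff:
  "DA_coeffs f c \<longleftrightarrow> (\<forall>z\<in>ball2. ((\<lambda>\<alpha>. mono2 z \<alpha> *s c \<alpha>) has_sum f z) UNIV) \<and>
     DA_normsq_term c summable_on UNIV"
  by (simp add: DA_coeffs_def DA_normsq_term_def[abs_def])

lemma DA_normsq_eq_infsum: "DA_normsq c = infsum (DA_normsq_term c) UNIV"
  by (simp add: DA_normsq_def DA_normsq_term_def[abs_def])

lemma DA_weight_pos: "DA_weight \<alpha> > 0"
  by (cases \<alpha>) (simp add: DA_weight_def)

lemma DA_normsq_term_nonneg: "0 \<le> DA_normsq_term c \<alpha>"
  by (simp add: DA_normsq_term_def less_imp_le[OF DA_weight_pos])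

lemma DA_weight_axes [simp]: "DA_weight (0, j) = 1" "DA_weight (i, 0) = 1"
  by (simp_all add: DA_weight_def)

lemma DA_weight_Suc_left: "DA_weight (Suc i, j) * real (Suc i + j) = DA_weight (i, j) * real (Suc i)"
proof -
  have "(fact (Suc i + j) :: real) = real (Suc i + j) * fact (i + j)"
    by (simp only: add_Suc fact_Suc of_nat_mult)
  then show ?thesis by (simp add: DA_weight_def)
qed

lemma DA_weight_Suc_right: "DA_weight (i, Suc j) * real (i + Suc j) = DA_weight (i, j) * real (Suc j)"
proof -
  have "(fact (i + Suc j) :: real) = real (i + Suc j) * fact (i + j)"
    by (simp only: add_Suc_right fact_Suc of_nat_mult)
  then show ?thesis by (simp add: DA_weight_def)
qed

lemma DA_normsq_term_row_shift_le:
  fixes a b :: "nat \<times> nat \<Rightarrow> 'a::real_inner"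
  shows "DA_normsq_term (row_shift a b) \<alpha> \<le> shift1 (DA_normsq_term a) \<alpha> + shift2 (DA_normsq_term b) \<alpha>"
proof (cases \<alpha>)
  case (Pair i j)
  consider "i = 0" | "j = 0" | i' j' where "i = Suc i'" "j = Suc j'"
    by (meson not0_implies_Suc)
  then show ?thesis
  proof cases
    case 1
    with Pair show ?thesis
      by (cases j) (simp_all add: DA_normsq_term_def row_shift_def shift1_def shift2_def)
  next
    case 2
    with Pair show ?thesis
      by (cases i) (simp_all add: DA_normsq_term_def row_shift_def shift1_def shift2_def)
  next
    case 3
    define x y where "x = real i" and "y = real j"
    define A B where "A = a (i', j)" and "B = b (i, j')"
    define W where "W = DA_weight (i, j)"
    have xy: "x * y > 0" using 3 by (simp add: x_def y_def)
    have w1: "DA_weight (i', j) * x = W * (x + y)"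
      using DA_weight_Suc_left[of i' j] 3 by (simp add: W_def x_def y_def)
    have w2: "DA_weight (i, j') * y = W * (x + y)"
      using DA_weight_Suc_right[of i j'] 3 by (simp add: W_def x_def y_def)
    have "x * y * (W * (norm (A + B))\<^sup>2) \<le> W * ((x + y) * y * (norm A)\<^sup>2 + (x + y) * x * (norm B)\<^sup>2)"
      using mult_left_mono[OF norm_add_sq_le_weighted less_imp_le[OF DA_weight_pos]]
      by (simp add: W_def algebra_simps)
    also have "\<dots> = y * (DA_weight (i', j) * x) * (norm A)\<^sup>2 + x * (DA_weight (i, j') * y) * (norm B)\<^sup>2"
      unfolding w1 w2 by (simp add: algebra_simps)
    also have "\<dots> = x * y * (DA_weight (i', j) * (norm A)\<^sup>2 + DA_weight (i, j') * (norm B)\<^sup>2)"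
      by (simp add: algebra_simps)
    finally have "W * (norm (A + B))\<^sup>2 \<le> DA_weight (i', j) * (norm A)\<^sup>2 + DA_weight (i, j') * (norm B)\<^sup>2"
      using xy by (simp add: mult_le_cancel_left_pos)
    with Pair 3 show ?thesis
      by (simp add: DA_normsq_term_def row_shift_def shift1_def shift2_def W_def A_def B_def)
  qed
qed

lemma DA_row_shift_contraction:
  fixes a b :: "nat \<times> nat \<Rightarrow> 'a::real_inner"
  assumes "DA_normsq_term a summable_on UNIV" "DA_normsq_term b summable_on UNIV"
  shows "DA_normsq_term (row_shift a b) summable_on UNIV"
    and "infsum (DA_normsq_term (row_shift a b)) UNIV
           \<le> infsum (DA_normsq_term a) UNIV + infsum (DA_normsq_term b) UNIV"
proof -
  define r where "r \<alpha> = shift1 (DA_normsq_term a) \<alpha> + shift2 (DA_normsq_term b) \<alpha>" for \<alpha>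
  have r: "(r has_sum (infsum (DA_normsq_term a) UNIV + infsum (DA_normsq_term b) UNIV)) UNIV"
    unfolding r_def using assms
    by (intro has_sum_add) (simp_all add: shift1_has_sum_iff shift2_has_sum_iff)
  have le: "DA_normsq_term (row_shift a b) \<alpha> \<le> r \<alpha>" for \<alpha>
    unfolding r_def by (rule DA_normsq_term_row_shift_le)
  have r_summable: "r summable_on UNIV"
    using r summable_on_def by blast
  show summable: "DA_normsq_term (row_shift a b) summable_on UNIV"
    using r_summable by (rule summable_on_comparison_test) (simp_all add: le DA_normsq_term_nonneg)
  have "infsum (DA_normsq_term (row_shift a b)) UNIV \<le> infsum r UNIV"
    by (rule infsum_mono[OF summable r_summable le])
  with infsumI[OF r] show "infsum (DA_normsq_term (row_shift a b)) UNIV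
           \<le> infsum (DA_normsq_term a) UNIV + infsum (DA_normsq_term b) UNIV"
    by simp
qed

lemma DA_normsq_term_vec:
  fixes c :: "nat \<times> nat \<Rightarrow> 'a::real_normed_vector^'n"
  shows "DA_normsq_term c \<alpha> = (\<Sum>k\<in>UNIV. DA_normsq_term (\<lambda>\<beta>. c \<beta> $ k) \<alpha>)"
  by (simp add: DA_normsq_term_def norm_vec_def L2_set_def sum_nonneg sum_distrib_left)

lemma DA_normsq_term_component_le: "DA_normsq_term (\<lambda>\<beta>. c \<beta> $ k) \<alpha> \<le> DA_normsq_term c \<alpha>"
  unfolding DA_normsq_term_def
  by (intro mult_left_mono power_mono Finite_Cartesian_Product.norm_nth_le) (simp_all add: less_imp_le[OF DA_weight_pos])

lemma summable_DA_normsq_term_component: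
  "DA_normsq_term c summable_on UNIV \<Longrightarrow> DA_normsq_term (\<lambda>\<beta>. c \<beta> $ k) summable_on UNIV"
  by (erule summable_on_comparison_test) (simp_all add: DA_normsq_term_component_le DA_normsq_term_nonneg)

lemma DA_normsq_eq_sum_components:
  assumes "DA_normsq_term c summable_on UNIV"
  shows "DA_normsq c = (\<Sum>k\<in>UNIV. infsum (DA_normsq_term (\<lambda>\<beta>. c \<beta> $ k)) UNIV)"
proof -
  have "((\<lambda>\<alpha>. \<Sum>k\<in>UNIV. DA_normsq_term (\<lambda>\<beta>. c \<beta> $ k) \<alpha>)
      has_sum (\<Sum>k\<in>UNIV. infsum (DA_normsq_term (\<lambda>\<beta>. c \<beta> $ k)) UNIV)) UNIV"
    using summable_DA_normsq_term_component[OF assms] by (intro has_sum_sum) auto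
  moreover have "(\<lambda>\<alpha>. \<Sum>k\<in>UNIV. DA_normsq_term (\<lambda>\<beta>. c \<beta> $ k) \<alpha>) = DA_normsq_term c"
    by (simp add: fun_eq_iff DA_normsq_term_vec)
  ultimately show ?thesis
    by (simp add: DA_normsq_eq_infsum infsumI)
qed

section \<open>The Schur multiplier\<close>

lemma holo2_const: "holo2 (\<lambda>z. c)"
  unfolding holo2_def by (intro ballI exI[of _ "\<lambda>h. 0"]) auto

lemma holo2_coord: "holo2 (\<lambda>z. z $ k)"
  unfolding holo2_def
  by (intro ballI exI[of _ "\<lambda>h. h $ k"] conjI allI bounded_linear_imp_has_derivative
      bounded_linear_vec_nth) simp

lemma holo2_mult:
  assumes "holo2 f" "holo2 g"
  shows "holo2 (\<lambda>z. f z * g z)"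
  unfolding holo2_def
proof
  fix z assume z: "z \<in> ball2"
  obtain F where F: "(f has_derivative F) (at z)" "\<And>c v. F (c *s v) = c * F v"
    using assms(1) z unfolding holo2_def by blast
  obtain G where G: "(g has_derivative G) (at z)" "\<And>c v. G (c *s v) = c * G v"
    using assms(2) z unfolding holo2_def by blast
  show "\<exists>L. ((\<lambda>z. f z * g z) has_derivative L) (at z) \<and> (\<forall>c v. L (c *s v) = c * L v)"
    using has_derivative_mult[OF F(1) G(1)] F(2) G(2)
    by (intro exI[of _ "\<lambda>h. f z * G h + F h * g z"]) (simp add: algebra_simps)
qed

lemma holo2_divide_const: "holo2 f \<Longrightarrow> holo2 (\<lambda>z. f z / c)"
  using holo2_mult[of f "\<lambda>z. 1 / c"] holo2_const by simp

definition sqrt3 :: complex where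
  "sqrt3 = complex_of_real (sqrt 3)"

lemma sqrt3_mult_self [simp]: "sqrt3 * sqrt3 = 3"
  unfolding sqrt3_def by (simp flip: of_real_mult)

lemma norm_sqrt3 [simp]: "cmod sqrt3 = sqrt 3"
  unfolding sqrt3_def by simp

lemma sqrt3_rotation_normsq:
  "(cmod (sqrt3 / 2 * a - b / 2))\<^sup>2 + (cmod (a / 2 + sqrt3 / 2 * b))\<^sup>2 = (cmod a)\<^sup>2 + (cmod b)\<^sup>2"
proof -
  have "(sqrt 3 / 2)\<^sup>2 + (1 / 2)\<^sup>2 = (1::real)"
    by (simp add: power_divide)
  from norm_rotation_sq[OF this, of a b] show ?thesis
    by (simp add: scaleR_conv_of_real sqrt3_def)
qed

lemma S_ex_mult_vec:
  "S_ex z *v v = vector [(z$1)\<^sup>2 / 2 * v$1 + z$1 * z$2 / 2 * v$2 + z$1 * z$2 / 2 * v$3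
     + (z$2)\<^sup>2 / 2 * v$4 + sqrt3 / 2 * v$5]"
  unfolding S_ex_def sqrt3_def by (simp add: vec_eq_iff matrix_vector_mult_def sum_5)

lemma holo2_S_ex_entry: "holo2 (\<lambda>z. S_ex z $ i $ j)"
proof -
  have i: "i = 1" by simp
  have "holo2 (\<lambda>z. z $ a * z $ b / 2)" for a b
    by (intro holo2_divide_const holo2_mult holo2_coord)
  with exhaust_5[of j] show ?thesis
    unfolding i by (elim disjE) (simp_all add: S_ex_def power2_eq_square holo2_const)
qed

text \<open>Read off from \<open>S f = (\<lambda>\<^sub>1 (\<lambda>\<^sub>1 f\<^sub>1 + \<lambda>\<^sub>2 f\<^sub>2) + \<lambda>\<^sub>2 (\<lambda>\<^sub>1 f\<^sub>3 + \<lambda>\<^sub>2 f\<^sub>4)) / 2 + \<surd>3 / 2 f\<^sub>5\<close>.\<close>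
definition S_ex_coeffs :: "(nat \<times> nat \<Rightarrow> complex^5) \<Rightarrow> nat \<times> nat \<Rightarrow> complex^1" where
  "S_ex_coeffs c \<alpha> = vector [row_shift (row_shift (\<lambda>\<beta>. c \<beta> $ 1) (\<lambda>\<beta>. c \<beta> $ 2))
     (row_shift (\<lambda>\<beta>. c \<beta> $ 3) (\<lambda>\<beta>. c \<beta> $ 4)) \<alpha> / 2 + sqrt3 / 2 * c \<alpha> $ 5]"

lemma has_sum_S_ex_coeffs:
  assumes "((\<lambda>\<alpha>. mono2 z \<alpha> *s c \<alpha>) has_sum v) UNIV"
  shows "((\<lambda>\<alpha>. mono2 z \<alpha> *s S_ex_coeffs c \<alpha>) has_sum (S_ex z *v v)) UNIV"
proof -
  define E where "E = row_shift (row_shift (\<lambda>\<beta>. c \<beta> $ 1) (\<lambda>\<beta>. c \<beta> $ 2))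
     (row_shift (\<lambda>\<beta>. c \<beta> $ 3) (\<lambda>\<beta>. c \<beta> $ 4))"
  have comp: "((\<lambda>\<alpha>. mono2 z \<alpha> * c \<alpha> $ k) has_sum v $ k) UNIV" for k
    using has_sum_vec_nth[OF assms, of k] by simp
  have "((\<lambda>\<alpha>. mono2 z \<alpha> * E \<alpha>)
      has_sum (z$1 * (z$1 * v$1 + z$2 * v$2) + z$2 * (z$1 * v$3 + z$2 * v$4))) UNIV"
    unfolding E_def by (intro has_sum_monomials_row_shift comp)
  then have "((\<lambda>\<alpha>. 1 / 2 * (mono2 z \<alpha> * E \<alpha>) + sqrt3 / 2 * (mono2 z \<alpha> * c \<alpha> $ 5))
      has_sum (1 / 2 * (z$1 * (z$1 * v$1 + z$2 * v$2) + z$2 * (z$1 * v$3 + z$2 * v$4))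
               + sqrt3 / 2 * v$5)) UNIV"
    by (intro has_sum_add has_sum_cmult_right comp)
  moreover have "(mono2 z \<alpha> *s S_ex_coeffs c \<alpha>) $ 1
      = 1 / 2 * (mono2 z \<alpha> * E \<alpha>) + sqrt3 / 2 * (mono2 z \<alpha> * c \<alpha> $ 5)" for \<alpha>
    by (simp add: S_ex_coeffs_def E_def algebra_simps)
  moreover have "(S_ex z *v v) $ 1
      = 1 / 2 * (z$1 * (z$1 * v$1 + z$2 * v$2) + z$2 * (z$1 * v$3 + z$2 * v$4)) + sqrt3 / 2 * v$5"
    by (simp add: S_ex_mult_vec algebra_simps power2_eq_square)
  ultimately show ?thesis
    by (intro has_sum_vec_1) simp
qed

lemma DA_normsq_S_ex_coeffs:
  assumes "DA_normsq_term c summable_on UNIV"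
  shows "DA_normsq_term (S_ex_coeffs c) summable_on UNIV"
    and "DA_normsq (S_ex_coeffs c) \<le> DA_normsq c"
proof -
  define ck where "ck k \<beta> = c \<beta> $ k" for k \<beta>
  define E where "E = row_shift (row_shift (ck 1) (ck 2)) (row_shift (ck 3) (ck 4))"
  define N where "N k = infsum (DA_normsq_term (ck k)) UNIV" for k
  have ck: "DA_normsq_term (ck k) summable_on UNIV" for k
    unfolding ck_def by (rule summable_DA_normsq_term_component[OF assms])
  note G = DA_row_shift_contraction[OF ck ck]
  have E: "DA_normsq_term E summable_on UNIV"
    "infsum (DA_normsq_term E) UNIV \<le> N 1 + N 2 + N 3 + N 4"
    using DA_row_shift_contraction[OF G(1) G(1), of 1 2 3 4] G(2)[of 1 2] G(2)[of 3 4]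
    unfolding E_def N_def by auto
  have pointwise: "DA_normsq_term (S_ex_coeffs c) \<alpha> \<le> DA_normsq_term E \<alpha> + DA_normsq_term (ck 5) \<alpha>" for \<alpha>
  proof -
    have coeff: "S_ex_coeffs c \<alpha> $ 1 = E \<alpha> / 2 + sqrt3 / 2 * ck 5 \<alpha>"
      by (simp add: S_ex_coeffs_def E_def ck_def[abs_def])
    have "(norm (S_ex_coeffs c \<alpha>))\<^sup>2 \<le> (cmod (E \<alpha>))\<^sup>2 + (cmod (ck 5 \<alpha>))\<^sup>2"
      unfolding norm_vector_1 coeff
      using sqrt3_rotation_normsq[of "E \<alpha>" "ck 5 \<alpha>"]
        zero_le_power2[of "cmod (sqrt3 / 2 * E \<alpha> - ck 5 \<alpha> / 2)"]
      by linarith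
    then have "DA_weight \<alpha> * (norm (S_ex_coeffs c \<alpha>))\<^sup>2
        \<le> DA_weight \<alpha> * ((cmod (E \<alpha>))\<^sup>2 + (cmod (ck 5 \<alpha>))\<^sup>2)"
      by (rule mult_left_mono) (simp add: less_imp_le[OF DA_weight_pos])
    then show ?thesis
      by (simp add: DA_normsq_term_def distrib_left)
  qed
  have bound: "(\<lambda>\<alpha>. DA_normsq_term E \<alpha> + DA_normsq_term (ck 5) \<alpha>) summable_on UNIV"
    using E(1) ck by (rule summable_on_add)
  show summable: "DA_normsq_term (S_ex_coeffs c) summable_on UNIV"
    by (rule summable_on_comparison_test[OF bound]) (simp_all add: pointwise DA_normsq_term_nonneg)
  have "DA_normsq (S_ex_coeffs c) \<le> infsum (\<lambda>\<alpha>. DA_normsq_term E \<alpha> + DA_normsq_term (ck 5) \<alpha>) UNIV"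
    unfolding DA_normsq_eq_infsum by (rule infsum_mono[OF summable bound pointwise])
  also have "\<dots> = infsum (DA_normsq_term E) UNIV + N 5"
    unfolding N_def by (rule infsum_add[OF E(1) ck])
  also have "\<dots> \<le> (\<Sum>k\<in>UNIV. N k)"
    using E(2) by (simp add: sum_5)
  also have "\<dots> = DA_normsq c"
    unfolding N_def ck_def by (rule DA_normsq_eq_sum_components[OF assms, symmetric])
  finally show "DA_normsq (S_ex_coeffs c) \<le> DA_normsq c" .
qed

lemma schur2_S_ex: "schur2 S_ex"
  unfolding schur2_def
proof (intro conjI allI impI)
  show "holo2 (\<lambda>z. S_ex z $ i $ j)" for i j
    by (rule holo2_S_ex_entry)
  fix f :: "complex^2 \<Rightarrow> complex^5" and c
  assume "DA_coeffs f c"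
  then have "DA_coeffs (\<lambda>z. S_ex z *v f z) (S_ex_coeffs c) \<and> DA_normsq (S_ex_coeffs c) \<le> DA_normsq c"
    by (simp add: DA_coeffs_iff has_sum_S_ex_coeffs DA_normsq_S_ex_coeffs)
  then show "\<exists>e. DA_coeffs (\<lambda>z. S_ex z *v f z) e \<and> DA_normsq e \<le> DA_normsq c"
    by blast
qed

section \<open>The colligation\<close>

lemma norm_sq_vec_3: "(norm (x :: complex^3))\<^sup>2 = (cmod (x$1))\<^sup>2 + (cmod (x$2))\<^sup>2 + (cmod (x$3))\<^sup>2"
  by (simp add: norm_vec_def L2_set_def sum_3)

lemma norm_sq_vec_5:
  "(norm (x :: complex^5))\<^sup>2
     = (cmod (x$1))\<^sup>2 + (cmod (x$2))\<^sup>2 + (cmod (x$3))\<^sup>2 + (cmod (x$4))\<^sup>2 + (cmod (x$5))\<^sup>2"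
  by (simp add: norm_vec_def L2_set_def sum_5)

lemma matrix_inv_unique:
  fixes A :: "'a::semiring_1^'n^'n"
  assumes "A ** B = mat 1" "B ** A = mat 1"
  shows "matrix_inv A = B"
proof -
  have "\<exists>A'. A ** A' = mat 1 \<and> A' ** A = mat 1"
    using assms by blast
  then have inv: "A ** matrix_inv A = mat 1"
    unfolding matrix_inv_def by (rule someI_ex[where P = "\<lambda>A'. A ** A' = mat 1 \<and> A' ** A = mat 1", THEN conjunct1])
  have "matrix_inv A = (B ** A) ** matrix_inv A"
    using assms by simp
  also have "\<dots> = B"
    using inv by (simp flip: matrix_mul_assoc)
  finally show ?thesis .
qed

lemma smat_matrix_mul: "smat c M ** U = smat c (M ** U)"
  by (simp add: vec_eq_iff smat_def matrix_matrix_mult_def sum_distrib_left mult.assoc)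

lemma unit_equiv2_scalar_invariant:
  assumes "unit_equiv2 C A1 A2 C' A1' A2'"
    and "C ** A2 ** A1 = smat \<mu> C" "C' ** A2' ** A1' = smat \<mu>' C'"
  shows "smat \<mu>' C = smat \<mu> C"
proof -
  obtain U where U: "C' ** U = C" "A1' ** U = U ** A1" "A2' ** U = U ** A2"
    using assms(1) unfolding unit_equiv2_def by blast
  have "smat \<mu>' C = C' ** A2' ** A1' ** U"
    using U(1) assms(3) by (simp add: smat_matrix_mul)
  also have "\<dots> = C ** A2 ** A1"
    using U by (metis matrix_mul_assoc)
  finally show ?thesis
    using assms(2) by simp
qed

definition B1_ex :: "complex \<Rightarrow> complex^5^3" where
  "B1_ex \<gamma> = vector [vector [0, 0, 0, 0, 0], vector [1, 0, 0, 0, 0],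
     vector [0, 1/2, 1/2, 0, - \<gamma> * sqrt3 / 3]]"

definition B2_ex :: "complex \<Rightarrow> complex^5^3" where
  "B2_ex \<gamma> = vector [vector [0, 0, 0, 0, 0], vector [0, 1/2, 1/2, 0, \<gamma> * sqrt3 / 3],
     vector [0, 0, 0, 1, 0]]"

lemma A1_ex_mult_vec: "A1_ex \<gamma> *v x = vector [x$2, 0, \<gamma> * x$1]"
  unfolding A1_ex_def by (simp add: vec_eq_iff forall_3 matrix_vector_mult_def sum_3)

lemma A2_ex_mult_vec: "A2_ex \<gamma> *v x = vector [x$3, - \<gamma> * x$1, 0]"
  unfolding A2_ex_def by (simp add: vec_eq_iff forall_3 matrix_vector_mult_def sum_3)

lemma C_ex_mult_vec: "C_ex *v x = vector [x$1 / 2]"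
  unfolding C_ex_def by (simp add: vec_eq_iff matrix_vector_mult_def sum_3)

lemma D_ex_mult_vec: "D_ex *v u = vector [sqrt3 / 2 * u$5]"
  unfolding D_ex_def sqrt3_def by (simp add: vec_eq_iff matrix_vector_mult_def sum_5)

lemma B1_ex_mult_vec: "B1_ex \<gamma> *v u = vector [0, u$1, (u$2 + u$3) / 2 - \<gamma> * sqrt3 / 3 * u$5]"
  unfolding B1_ex_def
  by (simp add: vec_eq_iff forall_3 matrix_vector_mult_def sum_5 algebra_simps)

lemma B2_ex_mult_vec: "B2_ex \<gamma> *v u = vector [0, (u$2 + u$3) / 2 + \<gamma> * sqrt3 / 3 * u$5, u$4]"
  unfolding B2_ex_def
  by (simp add: vec_eq_iff forall_3 matrix_vector_mult_def sum_5 algebra_simps)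

lemma norm_sq_le_of_norm_less_sqrt_3_8:
  assumes "cmod \<gamma> < sqrt (3/8)"
  shows "2 * (cmod \<gamma>)\<^sup>2 \<le> 3/4"
proof -
  have "(cmod \<gamma>)\<^sup>2 < (sqrt (3/8))\<^sup>2"
    using assms by (intro power_strict_mono) auto
  then show ?thesis by simp
qed

lemma contractive_pair2_ex:
  assumes "cmod \<gamma> < sqrt (3/8)"
  shows "contractive_pair2 C_ex (A1_ex \<gamma>) (A2_ex \<gamma>)"
  unfolding contractive_pair2_def
proof
  fix x :: "complex^3"
  have "2 * (cmod \<gamma>)\<^sup>2 * (cmod (x$1))\<^sup>2 \<le> 3/4 * (cmod (x$1))\<^sup>2"
    using norm_sq_le_of_norm_less_sqrt_3_8[OF assms] by (intro mult_right_mono) auto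
  then show "(norm (A1_ex \<gamma> *v x))\<^sup>2 + (norm (A2_ex \<gamma> *v x))\<^sup>2 + (norm (C_ex *v x))\<^sup>2 \<le> (norm x)\<^sup>2"
    unfolding A1_ex_mult_vec A2_ex_mult_vec C_ex_mult_vec norm_sq_vec_3 norm_vector_1
    by (simp add: norm_mult norm_divide power_mult_distrib power_divide)
qed

text \<open>With \<open>N = \<lambda>\<^sub>1 A\<^sub>1 + \<lambda>\<^sub>2 A\<^sub>2\<close> one has \<open>N\<^sup>3 = 0\<close>, and this is \<open>I + N + N\<^sup>2\<close>.\<close>
definition R_ex :: "complex \<Rightarrow> complex \<Rightarrow> complex \<Rightarrow> complex^3^3" where
  "R_ex \<gamma> a b = vector [vector [1, a, b], vector [- \<gamma> * b, 1 - \<gamma> * a * b, - \<gamma> * b * b],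
     vector [\<gamma> * a, \<gamma> * a * a, 1 + \<gamma> * a * b]]"

lemma resolv2_ex: "resolv2 (A1_ex \<gamma>) (A2_ex \<gamma>) z = R_ex \<gamma> (z$1) (z$2)"
  unfolding resolv2_def
  by (rule matrix_inv_unique)
     (simp_all add: vec_eq_iff forall_3 matrix_matrix_mult_def sum_3 mat_def smat_def
       A1_ex_def A2_ex_def R_ex_def algebra_simps)

lemma C_ex_R_ex_mult_vec: "C_ex *v (R_ex \<gamma> a b *v x) = vector [(x$1 + a * x$2 + b * x$3) / 2]"
  unfolding C_ex_mult_vec by (simp add: R_ex_def matrix_vector_mult_def sum_3 vec_eq_iff)

lemma vector_in_ball2: "(cmod a)\<^sup>2 + (cmod b)\<^sup>2 < 1 \<Longrightarrow> (vector [a, b] :: complex^2) \<in> ball2"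
  by (simp add: ball2_def norm_vec_def L2_set_def sum_2)

lemma observable2_ex: "observable2 C_ex (A1_ex \<gamma>) (A2_ex \<gamma>)"
  unfolding observable2_def
proof (intro allI impI)
  fix x :: "complex^3"
  assume vanish: "\<forall>z\<in>ball2. C_ex *v (resolv2 (A1_ex \<gamma>) (A2_ex \<gamma>) z *v x) = 0"
  have lin: "x$1 + a * x$2 + b * x$3 = 0" if "(cmod a)\<^sup>2 + (cmod b)\<^sup>2 < 1" for a b
  proof -
    have "C_ex *v (R_ex \<gamma> a b *v x) = 0"
      using vanish vector_in_ball2[OF that] resolv2_ex[of \<gamma> "vector [a, b]"] by fastforce
    then show ?thesis
      unfolding C_ex_R_ex_mult_vec by (simp add: vec_eq_iff)
  qed
  have "x$1 = 0" using lin[of 0 0] by simp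
  moreover have "x$2 = 0" using lin[of "1/2" 0] \<open>x$1 = 0\<close> by (simp add: power2_eq_square)
  moreover have "x$3 = 0" using lin[of 0 "1/2"] \<open>x$1 = 0\<close> by (simp add: power2_eq_square)
  ultimately show "x = 0"
    by (simp add: vec_eq_iff forall_3)
qed

lemma realizes2_ex: "realizes2 S_ex (A1_ex \<gamma>) (A2_ex \<gamma>) (B1_ex \<gamma>) (B2_ex \<gamma>) C_ex D_ex"
  unfolding realizes2_def resolv2_ex
  by (simp add: vec_eq_iff forall_5 matrix_matrix_mult_def sum_3 smat_def S_ex_def D_ex_def
       C_ex_def R_ex_def B1_ex_def B2_ex_def sqrt3_def algebra_simps power2_eq_square)

lemma C_ex_A2_ex_A1_ex: "C_ex ** A2_ex \<gamma> ** A1_ex \<gamma> = smat \<gamma> C_ex"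
  by (simp add: vec_eq_iff forall_3 matrix_matrix_mult_def sum_3 smat_def C_ex_def A1_ex_def A2_ex_def)

lemma not_unit_equiv2_ex:
  assumes "\<gamma> \<noteq> \<gamma>'"
  shows "\<not> unit_equiv2 C_ex (A1_ex \<gamma>) (A2_ex \<gamma>) C_ex (A1_ex \<gamma>') (A2_ex \<gamma>')"
proof
  assume "unit_equiv2 C_ex (A1_ex \<gamma>) (A2_ex \<gamma>) C_ex (A1_ex \<gamma>') (A2_ex \<gamma>')"
  then have "smat \<gamma>' C_ex = smat \<gamma> C_ex"
    by (rule unit_equiv2_scalar_invariant) (rule C_ex_A2_ex_A1_ex)+
  then have "smat \<gamma>' C_ex $ 1 $ 1 = smat \<gamma> C_ex $ 1 $ 1"
    by simp
  with assms show False
    by (simp add: smat_def C_ex_def)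
qed


lemma colligation_ex_contractive:
  assumes "cmod \<gamma> < sqrt (3/8)"
  shows "(norm (A1_ex \<gamma> *v x + B1_ex \<gamma> *v u))\<^sup>2 + (norm (A2_ex \<gamma> *v x + B2_ex \<gamma> *v u))\<^sup>2
           + (norm (C_ex *v x + D_ex *v u))\<^sup>2 \<le> (norm x)\<^sup>2 + (norm u)\<^sup>2"
proof -
  define s where "s = (u$2 + u$3) / 2"
  define p where "p = x$1 - sqrt3 / 3 * u$5"
  define d where "d = \<gamma> * p"
  have row1: "A1_ex \<gamma> *v x + B1_ex \<gamma> *v u = vector [x$2, u$1, s + d]"
    by (simp add: A1_ex_mult_vec B1_ex_mult_vec vec_eq_iff forall_3 s_def d_def p_def algebra_simps)
  have row2: "A2_ex \<gamma> *v x + B2_ex \<gamma> *v u = vector [x$3, s - d, u$4]"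
    by (simp add: A2_ex_mult_vec B2_ex_mult_vec vec_eq_iff forall_3 s_def d_def p_def algebra_simps)
  have row3: "C_ex *v x + D_ex *v u = vector [x$1 / 2 + sqrt3 / 2 * u$5]"
    by (simp add: C_ex_mult_vec D_ex_mult_vec vec_eq_iff)
  have "2 * (cmod s)\<^sup>2 = (cmod (u$2 + u$3))\<^sup>2 / 2"
    by (simp add: s_def norm_divide power_divide)
  then have "2 * (cmod s)\<^sup>2 \<le> (cmod (u$2))\<^sup>2 + (cmod (u$3))\<^sup>2"
    using parallelogram_law[of "u$2" "u$3"] zero_le_power2[of "cmod (u$2 - u$3)"] by linarith
  moreover have "2 * (cmod d)\<^sup>2 \<le> 3/4 * (cmod p)\<^sup>2"
    using mult_right_mono[OF norm_sq_le_of_norm_less_sqrt_3_8[OF assms] zero_le_power2[of "cmod p"]]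
    by (simp add: d_def norm_mult power_mult_distrib)
  moreover have "3/4 * (cmod p)\<^sup>2 + (cmod (x$1 / 2 + sqrt3 / 2 * u$5))\<^sup>2 = (cmod (x$1))\<^sup>2 + (cmod (u$5))\<^sup>2"
  proof -
    have rotated: "sqrt3 / 2 * x$1 - u$5 / 2 = sqrt3 / 2 * p"
      by (simp add: p_def algebra_simps)
    have "(cmod (sqrt3 / 2 * x$1 - u$5 / 2))\<^sup>2 = 3/4 * (cmod p)\<^sup>2"
      unfolding rotated by (simp add: norm_mult norm_divide power_mult_distrib power_divide)
    then show ?thesis
      using sqrt3_rotation_normsq[of "x$1" "u$5"] by linarith
  qed
  ultimately show ?thesis
    unfolding row1 row2 row3 norm_sq_vec_3 norm_sq_vec_5 norm_vector_1
    using parallelogram_law[of s d] by simp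
qed

text \<open>Again \<open>I + N + N\<^sup>2\<close>, now for the nilpotent \<open>N = \<lambda>\<^sub>1 A\<^sub>1\<^sup>* + \<lambda>\<^sub>2 A\<^sub>2\<^sup>*\<close>.\<close>
definition R_adj_ex :: "complex \<Rightarrow> complex \<Rightarrow> complex \<Rightarrow> complex^3^3" where
  "R_adj_ex \<gamma> a b = vector [vector [1, - b * \<gamma>, a * \<gamma>], vector [a, 1 - a * b * \<gamma>, a * a * \<gamma>],
     vector [b, - b * b * \<gamma>, 1 + a * b * \<gamma>]]"

lemma resolv2_adj_ex:
  "matrix_inv (mat 1 - smat a (cadj (A1_ex \<gamma>)) - smat b (cadj (A2_ex \<gamma>))) = R_adj_ex (cnj \<gamma>) a b"
  by (rule matrix_inv_unique)
     (simp_all add: vec_eq_iff forall_3 matrix_matrix_mult_def sum_3 mat_def smat_def cadj_def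
       A1_ex_def A2_ex_def R_adj_ex_def algebra_simps)

lemma closure_cspan2_subset_coord_eq:
  fixes G :: "((complex^'n) \<times> (complex^'n)) set"
  assumes "G \<subseteq> {h. fst h $ k = snd h $ l}"
  shows "closure (cspan2 G) \<subseteq> {h. fst h $ k = snd h $ l}"
proof (rule closure_minimal)
  show "cspan2 G \<subseteq> {h. fst h $ k = snd h $ l}"
  proof
    fix h assume "h \<in> cspan2 G"
    then obtain n :: nat and c g where h: "h = (\<Sum>i<n. c i *s fst (g i), \<Sum>i<n. c i *s snd (g i))"
      and g: "\<forall>i<n. g i \<in> G"
      unfolding cspan2_def by blast
    have "fst (g i) $ k = snd (g i) $ l" if "i < n" for i
      using g assms that by blast
    then show "h \<in> {h. fst h $ k = snd h $ l}"
      unfolding h by (auto simp: sum_component intro: sum.cong)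
  qed
  show "closed {h :: (complex^'n) \<times> (complex^'n). fst h $ k = snd h $ l}"
    by (intro closed_Collect_eq continuous_intros)
qed

lemma Dspace2_ex_subset: "Dspace2 (A1_ex \<gamma>) (A2_ex \<gamma>) C_ex \<subseteq> {h. fst h $ 3 = snd h $ 2}"
proof -
  have "(cnj (\<zeta>$1) *s v) $ 3 = (cnj (\<zeta>$2) *s v) $ 2"
    if "v = R_adj_ex (cnj \<gamma>) (cnj (\<zeta>$1)) (cnj (\<zeta>$2)) *v (cadj C_ex *v y)"
    for \<zeta> :: "complex^2" and y :: "complex^1" and v
    using that by (simp add: R_adj_ex_def C_ex_def cadj_def matrix_vector_mult_def sum_3)
  then show ?thesis
    unfolding Dspace2_def resolv2_adj_ex by (intro closure_cspan2_subset_coord_eq) auto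
qed

lemma colligation_ex_adjoint_isometric:
  assumes "h \<in> Dspace2 (A1_ex \<gamma>) (A2_ex \<gamma>) C_ex"
  shows "(norm (cadj (A1_ex \<gamma>) *v fst h + cadj (A2_ex \<gamma>) *v snd h + cadj C_ex *v y))\<^sup>2
        + (norm (cadj (B1_ex \<gamma>) *v fst h + cadj (B2_ex \<gamma>) *v snd h + cadj D_ex *v y))\<^sup>2
        = (norm (fst h))\<^sup>2 + (norm (snd h))\<^sup>2 + (norm y)\<^sup>2"
proof -
  have h: "fst h $ 3 = snd h $ 2"
    using Dspace2_ex_subset assms by blast
  have col1: "cadj (A1_ex \<gamma>) *v fst h + cadj (A2_ex \<gamma>) *v snd h + cadj C_ex *v y
      = vector [y$1 / 2, fst h $ 1, snd h $ 1]"
    by (simp add: vec_eq_iff forall_3 cadj_def A1_ex_def A2_ex_def C_ex_def matrix_vector_mult_def sum_3 h)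
  have col2: "cadj (B1_ex \<gamma>) *v fst h + cadj (B2_ex \<gamma>) *v snd h + cadj D_ex *v y
      = vector [fst h $ 2, fst h $ 3, fst h $ 3, snd h $ 3, sqrt3 / 2 * y$1]"
    by (simp add: vec_eq_iff forall_5 cadj_def B1_ex_def B2_ex_def D_ex_def sqrt3_def
        matrix_vector_mult_def sum_3 h)
  show ?thesis
    unfolding col1 col2 norm_sq_vec_3 norm_sq_vec_5 norm_vector_1
    by (simp add: h norm_mult norm_divide power_mult_distrib power_divide)
qed

lemma weakly_coisometric2_ex:
  assumes "cmod \<gamma> < sqrt (3/8)"
  shows "weakly_coisometric2 (A1_ex \<gamma>) (A2_ex \<gamma>) (B1_ex \<gamma>) (B2_ex \<gamma>) C_ex D_ex"
  unfolding weakly_coisometric2_def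
  using colligation_ex_contractive[OF assms] colligation_ex_adjoint_isometric by blast

theorem mainTheorem6:
  shows "schur2 S_ex \<and>
    (\<forall>\<gamma>::complex. norm \<gamma> < sqrt (3/8) \<longrightarrow>
       contractive_pair2 C_ex (A1_ex \<gamma>) (A2_ex \<gamma>) \<and>
       observable2 C_ex (A1_ex \<gamma>) (A2_ex \<gamma>) \<and>
       (\<exists>B1 B2 :: complex^5^3.
          realizes2 S_ex (A1_ex \<gamma>) (A2_ex \<gamma>) B1 B2 C_ex D_ex \<and>
          weakly_coisometric2 (A1_ex \<gamma>) (A2_ex \<gamma>) B1 B2 C_ex D_ex)) \<and>
    (\<forall>\<gamma> \<gamma>' :: complex. \<gamma> \<noteq> \<gamma>' \<longrightarrow>
       \<not> unit_equiv2 C_ex (A1_ex \<gamma>) (A2_ex \<gamma>) C_ex (A1_ex \<gamma>') (A2_ex \<gamma>'))"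
  using schur2_S_ex contractive_pair2_ex observable2_ex realizes2_ex weakly_coisometric2_ex
    not_unit_equiv2_ex
  by blast

end
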